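(* Suppose that $\langle s_\alpha : \alpha \in S \rangle$ is a disjoint stationary sequence on $\omega_2$. Then $(\omega_2 \cap \mathrm{cof}(\omega_1)) \setminus S$ is stationary in $\omega_2$.
   Context: For an uncountable ordinal $\alpha < \omega_2$, $P_{\omega_1}(\alpha)$ is the set of countable subsets of $\alpha$; a set $c \subseteq P_{\omega_1}(\alpha)$ is club if it is cofinal (under $\subseteq$) and closed under unions of countable increasing sequences, and $s \subseteq P_{\omega_1}(\alpha)$ is stationary if it meets every club in $P_{\omega_1}(\alpha)$. A disjoint stationary sequence on $\omega_2$ is a sequence $\langle s_\alpha : \alpha \in S \rangle$, where $S$ is a stationary subset of $\omega_2 \cap \mathrm{cof}(\omega_1)$, such that each $s_\alpha$ is a stationary subset of $P_{\omega_1}(\alpha)$ and $s_\alpha \cap s_\beta = \emptyset$ for all $\alpha < \beta$ in $S$. *)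

theory Defs
  imports Main "HOL-Library.Countable_Set"
begin

text \<open>Ordinals below omega_2 are modelled by the elements of a well-ordered type 'a
  whose order type is omega_2: every proper initial segment has cardinality at most
  aleph_1 (= cardSuc natLeq), while the whole type has cardinality bigger than aleph_1.\<close>

definition omega2_order :: "'a::wellorder itself \<Rightarrow> bool" where
  "omega2_order (_ :: 'a itself) \<longleftrightarrow>
     (\<forall>x::'a. (card_of {y. y < x}, cardSuc natLeq) \<in> ordLeq) \<and>
     (card_of (UNIV :: 'a set), cardSuc natLeq) \<notin> ordLeq"

definition cofinal_in :: "'a::wellorder set \<Rightarrow> 'a \<Rightarrow> bool" where
  "cofinal_in C \<alpha> \<longleftrightarrow> C \<subseteq> {..<\<alpha>} \<and> (\<forall>\<beta><\<alpha>. \<exists>\<gamma>\<in>C. \<beta> \<le> \<gamma>)"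

definition ordertype_omega1 :: "'a::wellorder set \<Rightarrow> bool" where
  "ordertype_omega1 C \<longleftrightarrow> \<not> countable C \<and> (\<forall>x\<in>C. countable {y\<in>C. y < x})"

definition cof_omega1 :: "'a::wellorder \<Rightarrow> bool" where
  "cof_omega1 \<alpha> \<longleftrightarrow>
     (\<exists>C. cofinal_in C \<alpha> \<and> ordertype_omega1 C) \<and>
     (\<forall>C. cofinal_in C \<alpha> \<longrightarrow> \<not> countable C)"

definition club_ord :: "'a::wellorder set \<Rightarrow> bool" where
  "club_ord C \<longleftrightarrow>
     (\<forall>x. \<exists>y\<in>C. x \<le> y) \<and>
     (\<forall>\<alpha>. (\<exists>\<gamma>\<in>C. \<gamma> < \<alpha>) \<and> (\<forall>\<beta><\<alpha>. \<exists>\<gamma>\<in>C. \<beta> < \<gamma> \<and> \<gamma> < \<alpha>) \<longrightarrow> \<alpha> \<in> C)"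

definition stationary_ord :: "'a::wellorder set \<Rightarrow> bool" where
  "stationary_ord T \<longleftrightarrow> (\<forall>C. club_ord C \<longrightarrow> T \<inter> C \<noteq> {})"

definition Pw1 :: "'a::wellorder \<Rightarrow> 'a set set" where
  "Pw1 \<alpha> = {x. x \<subseteq> {..<\<alpha>} \<and> countable x}"

definition club_P :: "'a::wellorder \<Rightarrow> 'a set set \<Rightarrow> bool" where
  "club_P \<alpha> c \<longleftrightarrow>
     c \<subseteq> Pw1 \<alpha> \<and>
     (\<forall>x\<in>Pw1 \<alpha>. \<exists>y\<in>c. x \<subseteq> y) \<and>
     (\<forall>f :: nat \<Rightarrow> 'a set. (\<forall>n. f n \<in> c) \<and> (\<forall>n. f n \<subseteq> f (Suc n)) \<longrightarrow> (\<Union>n. f n) \<in> c)"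

definition stationary_P :: "'a::wellorder \<Rightarrow> 'a set set \<Rightarrow> bool" where
  "stationary_P \<alpha> s \<longleftrightarrow> s \<subseteq> Pw1 \<alpha> \<and> (\<forall>c. club_P \<alpha> c \<longrightarrow> s \<inter> c \<noteq> {})"

definition disjoint_stationary_sequence :: "'a::wellorder set \<Rightarrow> ('a \<Rightarrow> 'a set set) \<Rightarrow> bool" where
  "disjoint_stationary_sequence S s \<longleftrightarrow>
     S \<subseteq> {\<alpha>. cof_omega1 \<alpha>} \<and> stationary_ord S \<and>
     (\<forall>\<alpha>\<in>S. stationary_P \<alpha> (s \<alpha>)) \<and>
     (\<forall>\<alpha>\<in>S. \<forall>\<beta>\<in>S. \<alpha> < \<beta> \<longrightarrow> s \<alpha> \<inter> s \<beta> = {})"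

end

theory Submission
  imports Defs "HOL-Library.Countable_Set_Type"
begin

text \<open>Suppose a club \<open>C\<close> meets \<open>cof(\<omega>\<^sub>1)\<close> only inside \<open>S\<close>. Build a continuous
  increasing \<open>\<omega>\<^sub>1\<close>-chain \<open>\<langle>N\<^sub>i\<rangle>\<close> of countable sets that is closed under the next
  element of \<open>C\<close>, under surjections from \<open>\<omega>\<^sub>1\<close> onto the ordinals in it, and under a
  choice of some \<open>\<gamma> \<in> S\<close> with \<open>N\<^sub>i \<in> s\<^sub>\<gamma>\<close> whenever there is one. Its union is an ordinal
  \<open>\<delta> \<in> C\<close> of cofinality \<open>\<omega>\<^sub>1\<close>, so \<open>\<delta> \<in> S\<close>; the chain is club in \<open>P\<^sub>\<omega>\<^sub>1(\<delta>)\<close>, so some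
  \<open>N\<^sub>i\<close> lies in \<open>s\<^sub>\<delta>\<close>, and then it also lies in \<open>s\<^sub>\<gamma>\<close> for a \<open>\<gamma> < \<delta>\<close> in \<open>S\<close>,
  contradicting disjointness.\<close>

section \<open>Sets of size at most \<open>\<aleph>\<^sub>1\<close>\<close>

unbundle cardinal_syntax

abbreviation aleph1 :: "nat set rel" where
  "aleph1 \<equiv> cardSuc natLeq"

lemma aleph1_Card_order: "Card_order aleph1"
  by (simp add: cardSuc_Card_order natLeq_Card_order)

lemma infinite_Field_aleph1: "\<not> finite (Field aleph1)"
  using Cinfinite_cardSuc[OF natLeq_Cinfinite] by (simp add: cinfinite_def)

lemma countable_iff_ordLess_aleph1: "countable A \<longleftrightarrow> |A| <o aleph1"
  by (simp add: countable_card_le_natLeq cardSuc_ordLeq_ordLess natLeq_Card_order card_of_Card_order)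

lemma countable_ordLeq_aleph1: "countable A \<Longrightarrow> |A| \<le>o aleph1"
  by (simp add: countable_iff_ordLess_aleph1 ordLess_imp_ordLeq)

lemma uncountable_Field_aleph1: "\<not> countable (Field aleph1)"
  using card_of_Field_ordIso[OF aleph1_Card_order] countable_iff_ordLess_aleph1
    ordIso_iff_ordLeq not_ordLess_ordLeq by blast

lemma UN_ordLeq_aleph1:
  "|I| \<le>o aleph1 \<Longrightarrow> (\<And>i. i \<in> I \<Longrightarrow> |A i| \<le>o aleph1) \<Longrightarrow> |\<Union>i\<in>I. A i| \<le>o aleph1"
  using card_of_UNION_ordLeq_infinite_Field[OF infinite_Field_aleph1 aleph1_Card_order] by blast

lemma Un_ordLeq_aleph1: "|A| \<le>o aleph1 \<Longrightarrow> |B| \<le>o aleph1 \<Longrightarrow> |A \<union> B| \<le>o aleph1"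
  by (rule card_of_Un_ordLeq_infinite_Field[OF infinite_Field_aleph1 _ _ aleph1_Card_order])

lemma omega2_lessThan_ordLeq_aleph1:
  "omega2_order TYPE('a::wellorder) \<Longrightarrow> |{..<x::'a}| \<le>o aleph1"
  unfolding omega2_order_def lessThan_def by blast

lemma omega2_bounded:
  fixes X :: "'a::wellorder set"
  assumes "omega2_order TYPE('a)" and "|X| \<le>o aleph1"
  shows "\<exists>z. \<forall>x\<in>X. x < z"
proof -
  have "|X \<union> (\<Union>x\<in>X. {..<x})| \<le>o aleph1"
    using assms by (intro Un_ordLeq_aleph1 UN_ordLeq_aleph1 omega2_lessThan_ordLeq_aleph1)
  moreover have "\<not> |UNIV :: 'a set| \<le>o aleph1"
    using assms(1) unfolding omega2_order_def by blast
  ultimately obtain z where "z \<notin> X \<union> (\<Union>x\<in>X. {..<x})"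
    by (metis UNIV_eq_I)
  then have "\<forall>x\<in>X. x < z" by (auto simp: not_less_iff_gr_or_eq)
  then show ?thesis ..
qed

lemma omega2_uncountable_lessThan:
  assumes "omega2_order TYPE('a::wellorder)"
  shows "\<exists>x::'a. \<not> countable {..<x}"
proof -
  have "\<not> |UNIV :: 'a set| \<le>o aleph1"
    using assms unfolding omega2_order_def by blast
  then have "aleph1 \<le>o |UNIV :: 'a set|"
    by (meson aleph1_Card_order card_of_Well_order card_order_on_well_order_on ordLess_imp_ordLeq
        not_ordLeq_iff_ordLess)
  then have "|Field aleph1| \<le>o |UNIV :: 'a set|"
    using card_of_Field_ordIso[OF aleph1_Card_order] ordIso_ordLeq_trans by blast
  then obtain f :: "nat set \<Rightarrow> 'a" where f: "inj_on f (Field aleph1)"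
    unfolding card_of_ordLeq[symmetric] by blast
  have "|f ` Field aleph1| \<le>o aleph1"
    using card_of_image card_of_Field_ordIso[OF aleph1_Card_order]
    by (blast intro: ordLeq_ordIso_trans)
  then obtain z where "f ` Field aleph1 \<subseteq> {..<z}"
    using omega2_bounded[OF assms] by blast
  moreover have "\<not> countable (f ` Field aleph1)"
    using f uncountable_Field_aleph1 countable_image_inj_on by blast
  ultimately show ?thesis
    using countable_subset by blast
qed

section \<open>\<open>\<omega>\<^sub>1\<close> inside an order of type \<open>\<omega>\<^sub>2\<close>\<close>

definition omega1 :: "'a::wellorder" where
  "omega1 = (LEAST x. \<not> countable {..<x})"

lemma countable_lessThan_below_omega1: "x < omega1 \<Longrightarrow> countable {..<x}"
  unfolding omega1_def using not_less_Least by blast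

lemma countable_atMost_below_omega1:
  assumes "x < omega1"
  shows "countable {..x}"
proof -
  have "{..x} = insert x {..<x}" by auto
  then show ?thesis using countable_lessThan_below_omega1[OF assms] by simp
qed

lemma uncountable_lessThan_omega1:
  "omega2_order TYPE('a::wellorder) \<Longrightarrow> \<not> countable {..<omega1::'a}"
  unfolding omega1_def by (rule LeastI_ex) (rule omega2_uncountable_lessThan)

lemma countable_bounded_below_omega1:
  fixes X :: "'a::wellorder set"
  assumes "omega2_order TYPE('a)" and "countable X" and "X \<subseteq> {..<omega1}"
  shows "\<exists>z < omega1. \<forall>x\<in>X. x < z"
proof -
  have "countable (\<Union>x\<in>X. {..x})"
    using assms(2,3) countable_atMost_below_omega1 by blast
  then obtain z where "z < omega1" "z \<notin> (\<Union>x\<in>X. {..x})"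
    using uncountable_lessThan_omega1[OF assms(1)] countable_subset by (metis lessThan_iff subsetI)
  then show ?thesis by (auto simp: not_le)
qed

lemma lessThan_image_of_omega1:
  fixes g :: "'a::wellorder"
  assumes "omega2_order TYPE('a)"
  shows "\<exists>e. {..<g} \<subseteq> e ` {..<omega1::'a}"
proof (cases "{..<g} = {}")
  case False
  have "aleph1 \<le>o |{..<omega1::'a}|"
    using uncountable_lessThan_omega1[OF assms]
    by (simp add: countable_iff_ordLess_aleph1 not_ordLess_iff_ordLeq aleph1_Card_order
        card_of_Well_order card_order_on_well_order_on)
  then have "|{..<g}| \<le>o |{..<omega1::'a}|"
    using omega2_lessThan_ordLeq_aleph1[OF assms] ordLeq_transitive by blast
  then obtain e :: "'a \<Rightarrow> 'a" where "e ` {..<omega1} = {..<g}"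
    using card_of_ordLeq2[OF False, of "{..<omega1}"] by blast
  then show ?thesis by blast
qed simp

section \<open>Continuous chains\<close>

definition closing_chain :: "('a::wellorder \<Rightarrow> 'b set \<Rightarrow> 'b set) \<Rightarrow> 'a \<Rightarrow> 'b set" where
  "closing_chain step = wfrec {(x, y). x < y} (\<lambda>f i. \<Union>j<i. step j (f j))"

lemma closing_chain_eq: "closing_chain step i = (\<Union>j<i. step j (closing_chain step j))"
  unfolding closing_chain_def by (subst wfrec[OF wf]) (simp add: cut_apply)

lemma step_closing_chain_subset: "j < i \<Longrightarrow> step j (closing_chain step j) \<subseteq> closing_chain step i"
  by (subst (2) closing_chain_eq) blast

lemma closing_chain_mono:
  assumes "\<And>j b. b \<subseteq> step j b" and "i \<le> j"
  shows "closing_chain step i \<subseteq> closing_chain step j"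
  using assms step_closing_chain_subset by (metis le_less order_refl subset_trans)

lemma closing_chain_least_upper_bound:
  fixes I :: "'a::wellorder set"
  assumes "\<And>j b. b \<subseteq> step j b" and "\<forall>i\<in>I. i \<le> z"
  shows "closing_chain step (LEAST z. \<forall>i\<in>I. i \<le> z) = (\<Union>i\<in>I. closing_chain step i)"
    (is "closing_chain step ?t = _")
proof
  have "step j (closing_chain step j) \<subseteq> (\<Union>i\<in>I. closing_chain step i)" if "j < ?t" for j
  proof -
    have "\<not> (\<forall>i\<in>I. i \<le> j)" by (rule not_less_Least[OF that])
    then obtain i where "i \<in> I" "j < i" by (auto simp: not_le)
    then show ?thesis using step_closing_chain_subset[of j i step] by blast
  qed
  then show "closing_chain step ?t \<subseteq> (\<Union>i\<in>I. closing_chain step i)"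
    by (subst closing_chain_eq) blast
  have "\<forall>i\<in>I. i \<le> ?t" by (rule LeastI[of "\<lambda>z. \<forall>i\<in>I. i \<le> z", OF assms(2)])
  then show "(\<Union>i\<in>I. closing_chain step i) \<subseteq> closing_chain step ?t"
    by (intro UN_least closing_chain_mono[OF assms(1)]) simp
qed

lemma countable_closing_chain:
  assumes "countable {..<i}" and "\<And>j b. j < i \<Longrightarrow> countable b \<Longrightarrow> countable (step j b)"
  shows "countable (closing_chain step i)"
  using assms
proof (induction i rule: less_induct)
  case (less i)
  have "countable (step j (closing_chain step j))" if "j < i" for j
  proof -
    have "countable {..<j}"
      using less.prems(1) countable_subset[of "{..<j}" "{..<i}"] that by auto
    then show ?thesis using less that by simp
  qed
  then show ?case using less.prems(1) by (subst closing_chain_eq) blast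
qed

lemma cof_omega1_if_strict_mono_cofinal:
  fixes h :: "'a::wellorder \<Rightarrow> 'a"
  assumes om: "omega2_order TYPE('a)"
    and mono: "strict_mono_on {..<omega1} h"
    and below: "h ` {..<omega1} \<subseteq> {..<\<delta>}"
    and cofinal: "\<forall>\<beta><\<delta>. \<exists>i < omega1. \<beta> \<le> h i"
  shows "cof_omega1 \<delta>"
proof -
  let ?H = "h ` {..<omega1}"
  have "cofinal_in ?H \<delta>"
    using below cofinal unfolding cofinal_in_def by blast
  moreover have "ordertype_omega1 ?H"
    unfolding ordertype_omega1_def
  proof (intro conjI ballI)
    show "\<not> countable ?H"
      using uncountable_lessThan_omega1[OF om] strict_mono_on_imp_inj_on[OF mono]
        countable_image_inj_on by blast
  next
    fix x assume "x \<in> ?H"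
    then obtain i where i: "i < omega1" "x = h i" by blast
    have "{y \<in> ?H. y < x} \<subseteq> h ` {..<i}"
    proof
      fix y assume "y \<in> {y \<in> ?H. y < x}"
      then obtain j where j: "j < omega1" "y = h j" "h j < h i" using i by auto
      then have "j < i" using strict_mono_on_less[OF mono, of j i] i(1) by simp
      then show "y \<in> h ` {..<i}" using j(2) by simp
    qed
    then show "countable {y \<in> ?H. y < x}"
      by (rule countable_subset) (simp add: countable_lessThan_below_omega1[OF i(1)])
  qed
  moreover have "\<not> countable X" if X: "cofinal_in X \<delta>" for X
  proof
    assume "countable X"
    have "\<forall>x\<in>X. \<exists>i < omega1. x \<le> h i"
      using X cofinal unfolding cofinal_in_def by auto
    then obtain idx where idx: "\<And>x. x \<in> X \<Longrightarrow> idx x < omega1 \<and> x \<le> h (idx x)"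
      by metis
    have "\<exists>z < omega1. \<forall>i\<in>idx ` X. i < z"
      using \<open>countable X\<close> idx by (intro countable_bounded_below_omega1[OF om]) auto
    then obtain z where z: "z < omega1" "\<forall>i\<in>idx ` X. i < z" by blast
    have "h z < \<delta>" using below z(1) by auto
    then obtain x where x: "x \<in> X" "h z \<le> x"
      using X unfolding cofinal_in_def by blast
    have "h z \<le> x" by (fact x(2))
    also have "x \<le> h (idx x)" using idx[OF x(1)] by simp
    also have "h (idx x) < h z"
      using idx[OF x(1)] z x(1) by (intro strict_mono_onD[OF mono]) auto
    finally show False by simp
  qed
  ultimately show ?thesis unfolding cof_omega1_def by blast
qed

section \<open>Closing off under a club\<close>

lemma down_closed_eq_lessThan_Least:
  fixes U :: "'a::wellorder set"
  assumes "\<And>x y. x \<in> U \<Longrightarrow> y < x \<Longrightarrow> y \<in> U" and "U \<noteq> UNIV"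
  shows "U = {..<(LEAST x. x \<notin> U)}"
proof -
  have "(LEAST x. x \<notin> U) \<notin> U" using assms(2) by (metis LeastI UNIV_eq_I)
  then show ?thesis
    using assms(1) not_less_Least by (fastforce simp: not_less_iff_gr_or_eq)
qed

locale club_avoiding_complement =
  fixes S :: "'a::wellorder set" and s :: "'a \<Rightarrow> 'a set set" and C :: "'a set"
  assumes omega2: "omega2_order TYPE('a)"
    and dss: "disjoint_stationary_sequence S s"
    and club: "club_ord C"
    and cof_omega1_in_S: "C \<inter> {\<alpha>. cof_omega1 \<alpha>} \<subseteq> S"
begin

definition index_of :: "'a set \<Rightarrow> 'a" where
  "index_of b = (SOME g. g \<in> S \<and> b \<in> s g)"

definition next_club :: "'a set \<Rightarrow> 'a" where
  "next_club b = (LEAST z. z \<in> C \<and> (\<forall>y\<in>b. y < z))"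

definition enum :: "'a \<Rightarrow> 'a \<Rightarrow> 'a" where
  "enum g = (SOME e. {..<g} \<subseteq> e ` {..<omega1})"

text \<open>Closing under \<^const>\<open>enum\<close> makes the union of the chain an initial segment
  \<open>{..<\<delta>}\<close>, closing under \<^const>\<open>next_club\<close> makes \<open>\<delta>\<close> a limit point of \<open>C\<close>, and
  closing under \<^const>\<open>index_of\<close> keeps the witnesses \<open>\<gamma>\<close> below \<open>\<delta>\<close>.\<close>

definition step :: "'a \<Rightarrow> 'a set \<Rightarrow> 'a set" where
  "step j b = b \<union> {index_of b, next_club b} \<union> (\<Union>g\<in>b. enum g ` {..j})"

abbreviation N :: "'a \<Rightarrow> 'a set" where
  "N \<equiv> closing_chain step"

definition U :: "'a set" where
  "U = (\<Union>i < omega1. N i)"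

definition \<delta> :: 'a where
  "\<delta> = (LEAST x. x \<notin> U)"

lemma subset_step: "b \<subseteq> step j b"
  unfolding step_def by blast

lemma index_of_in_step: "index_of b \<in> step j b"
  unfolding step_def by blast

lemma next_club_in_step: "next_club b \<in> step j b"
  unfolding step_def by blast

lemma enum_in_step: "g \<in> b \<Longrightarrow> k \<le> j \<Longrightarrow> enum g k \<in> step j b"
  unfolding step_def by blast

lemma N_mono: "i \<le> j \<Longrightarrow> N i \<subseteq> N j"
  by (rule closing_chain_mono[of step, OF subset_step])

lemma countable_N: "i < omega1 \<Longrightarrow> countable (N i)"
proof (rule countable_closing_chain)
  show "countable (step j b)" if "j < i" "i < omega1" "countable b" for j b
  proof -
    have "countable {..j}" using that by (intro countable_atMost_below_omega1) simp
    then show ?thesis using \<open>countable b\<close> unfolding step_def by simp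
  qed
qed (rule countable_lessThan_below_omega1)

lemma step_N_subset_U:
  assumes "i < omega1"
  shows "step i (N i) \<subseteq> U"
proof -
  have "\<exists>j < omega1. \<forall>x\<in>{i}. x < j"
    using assms by (intro countable_bounded_below_omega1[OF omega2]) auto
  then obtain j where "j < omega1" "i < j" by blast
  then show ?thesis
    unfolding U_def using step_closing_chain_subset[of i j step] by blast
qed

lemma next_club_above:
  assumes "|b| \<le>o aleph1"
  shows "next_club b \<in> C \<and> (\<forall>y\<in>b. y < next_club b)"
proof -
  obtain z where "\<forall>y\<in>b. y < z" using omega2_bounded[OF omega2 assms] by blast
  moreover obtain c where "c \<in> C" "z \<le> c" using club unfolding club_ord_def by blast
  ultimately have "c \<in> C \<and> (\<forall>y\<in>b. y < c)" by (meson less_le_trans)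
  then show ?thesis unfolding next_club_def by (rule LeastI)
qed

lemma U_down_closed:
  assumes "x \<in> U" and "y < x"
  shows "y \<in> U"
proof -
  obtain i where i: "i < omega1" "x \<in> N i" using assms(1) unfolding U_def by blast
  have "{..<x} \<subseteq> enum x ` {..<omega1}"
    unfolding enum_def using lessThan_image_of_omega1[OF omega2] by (rule someI_ex)
  then have "y \<in> enum x ` {..<omega1}" using assms(2) by auto
  then obtain k where k: "k < omega1" "y = enum x k" by auto
  let ?m = "max i k"
  have "?m < omega1" using i(1) k(1) by simp
  have "x \<in> N ?m" using i(2) N_mono[of i ?m] by auto
  then have "y \<in> step ?m (N ?m)" using k(2) by (simp add: enum_in_step)
  then show ?thesis using step_N_subset_U[OF \<open>?m < omega1\<close>] by blast
qed

lemma U_eq: "U = {..<\<delta>}"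
proof -
  have "|U| \<le>o aleph1"
    unfolding U_def
    by (intro UN_ordLeq_aleph1 omega2_lessThan_ordLeq_aleph1[OF omega2] countable_ordLeq_aleph1
        countable_N) simp
  then obtain z where "\<forall>x\<in>U. x < z" using omega2_bounded[OF omega2] by blast
  then have "U \<noteq> UNIV" by auto
  then show ?thesis
    unfolding \<delta>_def using U_down_closed by (intro down_closed_eq_lessThan_Least)
qed

lemma next_club_N:
  assumes "i < omega1"
  shows "next_club (N i) \<in> C" and "\<forall>y\<in>N i. y < next_club (N i)" and "next_club (N i) < \<delta>"
proof -
  have "|N i| \<le>o aleph1" using countable_N[OF assms] by (rule countable_ordLeq_aleph1)
  then show "next_club (N i) \<in> C" "\<forall>y\<in>N i. y < next_club (N i)"
    using next_club_above by blast+
  have "next_club (N i) \<in> U" using step_N_subset_U[OF assms] next_club_in_step by blast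
  then show "next_club (N i) < \<delta>" using U_eq by simp
qed

lemma cofinal_next_club_N:
  assumes "\<beta> < \<delta>"
  shows "\<exists>i < omega1. \<beta> < next_club (N i)"
proof -
  have "\<beta> \<in> U" using assms U_eq by simp
  then obtain i where "i < omega1" "\<beta> \<in> N i" unfolding U_def by blast
  then show ?thesis using next_club_N(2) by blast
qed

lemma strict_mono_next_club_N: "strict_mono_on {..<omega1} (\<lambda>i. next_club (N i))"
proof (rule strict_mono_onI)
  fix i j :: 'a assume "i \<in> {..<omega1}" "j \<in> {..<omega1}" "i < j"
  have "step i (N i) \<subseteq> N j" using \<open>i < j\<close> by (rule step_closing_chain_subset)
  then have "next_club (N i) \<in> N j" using next_club_in_step by blast
  then show "next_club (N i) < next_club (N j)"
    using next_club_N(2)[of j] \<open>j \<in> {..<omega1}\<close> by simp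
qed

lemma \<delta>_in_C: "\<delta> \<in> C"
proof -
  have "{..<omega1::'a} \<noteq> {}" using uncountable_lessThan_omega1[OF omega2] by auto
  then obtain i :: 'a where "i < omega1" by auto
  then have "\<exists>\<gamma>\<in>C. \<gamma> < \<delta>" using next_club_N(1,3) by blast
  moreover have "\<forall>\<beta><\<delta>. \<exists>\<gamma>\<in>C. \<beta> < \<gamma> \<and> \<gamma> < \<delta>"
  proof (intro allI impI)
    fix \<beta> assume "\<beta> < \<delta>"
    then obtain i where "i < omega1" "\<beta> < next_club (N i)" using cofinal_next_club_N by blast
    then show "\<exists>\<gamma>\<in>C. \<beta> < \<gamma> \<and> \<gamma> < \<delta>" using next_club_N(1,3) by blast
  qed
  ultimately show ?thesis using club unfolding club_ord_def by blast
qed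

lemma cof_omega1_\<delta>: "cof_omega1 \<delta>"
proof (rule cof_omega1_if_strict_mono_cofinal[OF omega2 strict_mono_next_club_N])
  show "(\<lambda>i. next_club (N i)) ` {..<omega1} \<subseteq> {..<\<delta>}" using next_club_N(3) by auto
  show "\<forall>\<beta><\<delta>. \<exists>i < omega1. \<beta> \<le> next_club (N i)"
    using cofinal_next_club_N by (blast intro: less_imp_le)
qed

lemma countable_subset_N:
  assumes "countable X" and "X \<subseteq> U"
  shows "\<exists>z < omega1. X \<subseteq> N z"
proof -
  have "\<forall>x\<in>X. \<exists>i < omega1. x \<in> N i" using assms(2) unfolding U_def by auto
  then obtain idx where idx: "\<And>x. x \<in> X \<Longrightarrow> idx x < omega1 \<and> x \<in> N (idx x)" by metis
  have "\<exists>z < omega1. \<forall>i\<in>idx ` X. i < z"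
    using assms(1) idx by (intro countable_bounded_below_omega1[OF omega2]) auto
  then obtain z where z: "z < omega1" "\<forall>i\<in>idx ` X. i < z" by blast
  have "X \<subseteq> N z"
  proof
    fix x assume "x \<in> X"
    then have "idx x \<le> z" "x \<in> N (idx x)" using idx z(2) by (auto intro: less_imp_le)
    then show "x \<in> N z" using N_mono by blast
  qed
  then show ?thesis using z(1) by blast
qed

lemma club_P_N: "club_P \<delta> (N ` {..<omega1})"
  unfolding club_P_def
proof (intro conjI allI impI ballI)
  show "N ` {..<omega1} \<subseteq> Pw1 \<delta>"
  proof
    fix b assume "b \<in> N ` {..<omega1}"
    then obtain i where "i < omega1" "b = N i" by auto
    then have "b \<subseteq> U" "countable b" using countable_N unfolding U_def by auto
    then show "b \<in> Pw1 \<delta>" unfolding Pw1_def U_eq by simp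
  qed
next
  fix x assume "x \<in> Pw1 \<delta>"
  then have "countable x" "x \<subseteq> U" unfolding Pw1_def U_eq by auto
  then obtain z where "z < omega1" "x \<subseteq> N z" using countable_subset_N by blast
  then show "\<exists>y\<in>N ` {..<omega1}. x \<subseteq> y" by auto
next
  fix f :: "nat \<Rightarrow> 'a set"
  assume "(\<forall>n. f n \<in> N ` {..<omega1}) \<and> (\<forall>n. f n \<subseteq> f (Suc n))"
  then have "\<forall>n. \<exists>i < omega1. f n = N i" by (metis imageE lessThan_iff)
  then obtain ix where ix: "\<And>n. ix n < omega1" "\<And>n. f n = N (ix n)" by metis
  have "\<exists>z < omega1. \<forall>i\<in>range ix. i < z"
    using ix(1) by (intro countable_bounded_below_omega1[OF omega2]) auto
  then obtain z where z: "z < omega1" "\<forall>i\<in>range ix. i < z" by blast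
  let ?t = "LEAST z. \<forall>i\<in>range ix. i \<le> z"
  have "?t \<le> z" using z(2) by (intro Least_le) (auto intro: less_imp_le)
  then have "?t < omega1" using z(1) by (rule le_less_trans)
  have "N ?t = (\<Union>i\<in>range ix. N i)"
    using z(2) by (intro closing_chain_least_upper_bound[of step, OF subset_step]) (auto intro: less_imp_le)
  also have "\<dots> = (\<Union>n. f n)" using ix(2) by simp
  finally show "(\<Union>n. f n) \<in> N ` {..<omega1}" using \<open>?t < omega1\<close> by auto
qed

lemma contradiction: False
proof -
  have "\<delta> \<in> S" using cof_omega1_in_S \<delta>_in_C cof_omega1_\<delta> by blast
  then have "stationary_P \<delta> (s \<delta>)" using dss unfolding disjoint_stationary_sequence_def by blast
  then have "s \<delta> \<inter> N ` {..<omega1} \<noteq> {}" using club_P_N unfolding stationary_P_def by blast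
  then obtain i where i: "i < omega1" "N i \<in> s \<delta>" by auto
  let ?g = "index_of (N i)"
  have g: "?g \<in> S \<and> N i \<in> s ?g"
    unfolding index_of_def by (rule someI[where x = \<delta>]) (simp add: \<open>\<delta> \<in> S\<close> i(2))
  have "?g \<in> U" using step_N_subset_U[OF i(1)] index_of_in_step by blast
  then have "?g < \<delta>" using U_eq by simp
  then have "s ?g \<inter> s \<delta> = {}"
    using dss g \<open>\<delta> \<in> S\<close> unfolding disjoint_stationary_sequence_def by blast
  then show False using g i(2) by blast
qed

end

theorem proposition1p5:
  fixes S :: "'a::wellorder set" and s :: "'a \<Rightarrow> 'a set set"
  assumes "omega2_order TYPE('a)"
    and "disjoint_stationary_sequence S s"
  shows "stationary_ord ({\<alpha>. cof_omega1 \<alpha>} - S)"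
  unfolding stationary_ord_def
proof (intro allI impI notI)
  fix C :: "'a set"
  assume "club_ord C" and "({\<alpha>. cof_omega1 \<alpha>} - S) \<inter> C = {}"
  then have "C \<inter> {\<alpha>. cof_omega1 \<alpha>} \<subseteq> S" by blast
  then interpret club_avoiding_complement S s C
    using assms \<open>club_ord C\<close> by unfold_locales
  show False by (rule contradiction)
qed

end
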